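(* For every oriented path $P$, $\mathrm{mad}_{\delta^+}(P)=|V(P)|-1$.
   Context: An oriented path is an orientation of an undirected path. A subdivision of a digraph $F$ is a digraph obtained from $F$ by replacing each arc $(x,y)$ by a directed path from $x$ to $y$ (internally disjoint, new internal vertices). For a digraph $F$, $\mathrm{mad}_{\delta^+}(F)$ is the least integer $c$ such that every digraph $D$ with minimum out-degree $\delta^+(D)\ge c$ contains a subdivision of $F$ as a subdigraph. *)

theory Defs
  imports Main
begin

definition digraph :: "'a set \<Rightarrow> ('a \<times> 'a) set \<Rightarrow> bool" where
  "digraph V A \<longleftrightarrow> finite V \<and> A \<subseteq> V \<times> V \<and> (\<forall>v. (v, v) \<notin> A)"

definition outdeg :: "('a \<times> 'a) set \<Rightarrow> 'a \<Rightarrow> nat" where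
  "outdeg A v = card {w. (v, w) \<in> A}"

definition oriented_path :: "'a set \<Rightarrow> ('a \<times> 'a) set \<Rightarrow> bool" where
  "oriented_path V A \<longleftrightarrow> digraph V A \<and>
     (\<exists>vs. vs \<noteq> [] \<and> distinct vs \<and> set vs = V \<and>
        A \<subseteq> {(vs ! i, vs ! Suc i) | i. Suc i < length vs} \<union> {(vs ! Suc i, vs ! i) | i. Suc i < length vs} \<and>
        (\<forall>i. Suc i < length vs \<longrightarrow> ((vs ! i, vs ! Suc i) \<in> A \<longleftrightarrow> (vs ! Suc i, vs ! i) \<notin> A)))"

definition dipath :: "('a \<times> 'a) set \<Rightarrow> 'a list \<Rightarrow> bool" where
  "dipath A ps \<longleftrightarrow> 2 \<le> length ps \<and> distinct ps \<and>
     (\<forall>i. Suc i < length ps \<longrightarrow> (ps ! i, ps ! Suc i) \<in> A)"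

definition inner :: "'a list \<Rightarrow> 'a list" where
  "inner ps = butlast (tl ps)"

definition contains_subdivision ::
  "'a set \<Rightarrow> ('a \<times> 'a) set \<Rightarrow> 'b set \<Rightarrow> ('b \<times> 'b) set \<Rightarrow> bool" where
  "contains_subdivision VF AF VD AD \<longleftrightarrow>
     (\<exists>(f :: 'a \<Rightarrow> 'b) (P :: 'a \<times> 'a \<Rightarrow> 'b list).
        inj_on f VF \<and> f ` VF \<subseteq> VD \<and>
        (\<forall>(x, y) \<in> AF. dipath AD (P (x, y)) \<and> hd (P (x, y)) = f x \<and> last (P (x, y)) = f y) \<and>
        (\<forall>e \<in> AF. set (inner (P e)) \<inter> f ` VF = {}) \<and>
        (\<forall>e \<in> AF. \<forall>e' \<in> AF. e \<noteq> e' \<longrightarrow> set (inner (P e)) \<inter> set (inner (P e')) = {}))"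

text \<open>Host digraphs are taken on
  vertex type nat (every finite digraph is isomorphic to one on nat).\<close>
definition mad_outdeg :: "'a set \<Rightarrow> ('a \<times> 'a) set \<Rightarrow> nat" where
  "mad_outdeg VF AF = (LEAST c :: nat. \<forall>(VD :: nat set) AD.
       digraph VD AD \<and> VD \<noteq> {} \<and> (\<forall>v \<in> VD. c \<le> outdeg AD v) \<longrightarrow>
       contains_subdivision VF AF VD AD)"

end

theory Submission
  imports Defs
begin

text \<open>Let k = |V(P)| - 1. For the upper bound, pass to a terminal strong component S of the host
  digraph: it is strongly connected and every vertex keeps all its out-neighbours, at least k, in S.
  Embed P along its vertex list by induction on k, placing the last branch vertex at an arbitrary v
  in S. Every terminal strong component T of S - v loses at most one out-neighbour per vertex, so it
  hosts the first k - 1 edges by induction. If the last edge points towards v, pick T and its last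
  branch vertex at the tail of an arc into v, which exists because S is strongly connected; if it
  points away from v, pick T reachable in S - v from an out-neighbour y of v and subdivide the edge
  by v followed by a shortest path from y into T. For the lower bound, the complete digraph on
  |V(P)| - 1 vertices has minimum out-degree |V(P)| - 2 and too few vertices.\<close>

definition out_closed :: "('b \<times> 'b) set \<Rightarrow> 'b set \<Rightarrow> 'b set \<Rightarrow> bool" where
  "out_closed E U T \<longleftrightarrow> T \<subseteq> U \<and> (\<forall>a\<in>T. \<forall>b\<in>U. (a, b) \<in> E \<longrightarrow> b \<in> T)"

definition strongly_connected_on :: "('b \<times> 'b) set \<Rightarrow> 'b set \<Rightarrow> bool" where
  "strongly_connected_on E T \<longleftrightarrow> (\<forall>a\<in>T. \<forall>b\<in>T. (a, b) \<in> (Restr E T)\<^sup>*)"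

lemma rtrancl_restrict_mem:
  "(a, c) \<in> (Restr E T)\<^sup>* \<Longrightarrow> a \<in> T \<Longrightarrow> c \<in> T"
  by (induction rule: rtrancl_induct) auto

lemma out_closed_reachable_set:
  "out_closed E U {b \<in> U. (a, b) \<in> (Restr E U)\<^sup>*}"
  unfolding out_closed_def by (auto intro: rtrancl_into_rtrancl)

text \<open>The minimal nonempty out-closed subsets of U are the terminal strong components of U: the
  vertices reachable inside such a set from any of its vertices are again out-closed.\<close>
lemma ex_strongly_connected_out_closed:
  assumes "finite U" "out_closed E U X" "X \<noteq> {}"
  obtains T where "T \<subseteq> X" "T \<noteq> {}" "out_closed E U T" "strongly_connected_on E T"
proof -
  define F where "F = {T. T \<subseteq> X \<and> T \<noteq> {} \<and> out_closed E U T}"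
  obtain T where T: "T \<in> F" and min: "\<And>T'. T' \<in> F \<Longrightarrow> card T \<le> card T'"
    using ex_has_least_nat[of "\<lambda>T. T \<in> F" X card] assms unfolding F_def by blast
  have finT: "finite T"
    using T assms(1) unfolding F_def out_closed_def by (blast intro: finite_subset)
  have "strongly_connected_on E T" unfolding strongly_connected_on_def
  proof (intro ballI)
    fix a b assume "a \<in> T" "b \<in> T"
    define R where "R = {c \<in> T. (a, c) \<in> (Restr E T)\<^sup>*}"
    have "out_closed E U R"
      using T out_closed_reachable_set[of E T a] unfolding R_def F_def out_closed_def by blast
    with \<open>a \<in> T\<close> T have "R \<in> F" unfolding R_def F_def by auto
    then have "R = T" using min finT by (intro card_seteq) (auto simp: R_def)
    with \<open>b \<in> T\<close> show "(a, b) \<in> (Restr E T)\<^sup>*" unfolding R_def by blast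
  qed
  with T show thesis using that unfolding F_def by blast
qed

lemma rtrancl_exit_arc:
  "(u, w) \<in> R\<^sup>* \<Longrightarrow> u \<in> T \<Longrightarrow> w \<notin> T \<Longrightarrow> \<exists>a b. (a, b) \<in> R \<and> a \<in> T \<and> b \<notin> T"
  by (induction rule: rtrancl_induct) auto

lemma dipath_iff_successively:
  "dipath E ps \<longleftrightarrow> 2 \<le> length ps \<and> distinct ps \<and> successively (\<lambda>x y. (x, y) \<in> E) ps"
  by (simp add: dipath_def successively_conv_nth)

lemma rtrancl_shortest_path_into:
  assumes "(a, b) \<in> R\<^sup>*" "b \<in> T"
  obtains ps where "ps \<noteq> []" "hd ps = a" "last ps \<in> T" "distinct ps" "set (butlast ps) \<inter> T = {}"
    "successively (\<lambda>x y. (x, y) \<in> R) ps" "set ps \<subseteq> R\<^sup>* `` {a}"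
proof -
  from assms have "\<exists>ps. ps \<noteq> [] \<and> hd ps = a \<and> last ps \<in> T \<and> distinct ps \<and> set (butlast ps) \<inter> T = {}
    \<and> successively (\<lambda>x y. (x, y) \<in> R) ps \<and> set ps \<subseteq> R\<^sup>* `` {a}"
  proof (induction rule: converse_rtrancl_induct)
    case base
    then show ?case by (intro exI[of _ "[b]"]) auto
  next
    case (step a c)
    then obtain ps where ps: "ps \<noteq> []" "hd ps = c" "last ps \<in> T" "distinct ps"
      "set (butlast ps) \<inter> T = {}" "successively (\<lambda>x y. (x, y) \<in> R) ps" "set ps \<subseteq> R\<^sup>* `` {c}"
      by blast
    have reach: "R\<^sup>* `` {c} \<subseteq> R\<^sup>* `` {a}"
      using step.hyps(1) by (auto intro: converse_rtrancl_into_rtrancl)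
    consider "a \<in> T" | "a \<notin> T" "a \<in> set ps" | "a \<notin> T" "a \<notin> set ps" by blast
    then show ?case
    proof cases
      case 1
      then show ?thesis by (intro exI[of _ "[a]"]) auto
    next
      case 2
      then obtain xs ys where ps_split: "ps = xs @ a # ys" by (meson split_list)
      have "set (butlast (a # ys)) \<subseteq> set (butlast ps)"
        unfolding ps_split by (cases ys) (auto simp: butlast_append)
      then show ?thesis
        using ps reach unfolding ps_split
        by (intro exI[of _ "a # ys"]) (auto simp: successively_append_iff)
    next
      case 3
      have "set (butlast (a # ps)) \<inter> T = {}" using ps(1,5) 3 by (cases ps) auto
      then show ?thesis
        using ps reach 3 step.hyps(1) by (intro exI[of _ "a # ps"]) (auto simp: successively_Cons)
    qed
  qed
  then show thesis using that by blast
qed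

lemma card_out_neighbours_le_Suc:
  assumes "finite S" "out_closed E (S - {v}) T" "u \<in> T"
  shows "card {w \<in> S. (u, w) \<in> E} \<le> Suc (card {w \<in> T. (u, w) \<in> E})"
proof -
  have "finite T" using assms(1,2) unfolding out_closed_def by (blast intro: finite_subset)
  moreover have "{w \<in> S. (u, w) \<in> E} \<subseteq> insert v {w \<in> T. (u, w) \<in> E}"
    using assms(2,3) unfolding out_closed_def by blast
  ultimately have "card {w \<in> S. (u, w) \<in> E} \<le> card (insert v {w \<in> T. (u, w) \<in> E})"
    by (intro card_mono) auto
  also have "\<dots> \<le> Suc (card {w \<in> T. (u, w) \<in> E})"
    by (simp add: card_insert_if \<open>finite T\<close>)
  finally show ?thesis .
qed

lemma ex_strongly_connected_out_closed_arc_to: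
  assumes "finite S" "strongly_connected_on E S" "v \<in> S" "S - {v} \<noteq> {}"
  obtains T a where "T \<noteq> {}" "out_closed E (S - {v}) T" "strongly_connected_on E T"
    "a \<in> T" "(a, v) \<in> E"
proof -
  have "out_closed E (S - {v}) (S - {v})" unfolding out_closed_def by blast
  with assms(1,4) obtain T where T: "T \<noteq> {}" "out_closed E (S - {v}) T" "strongly_connected_on E T"
    by (metis ex_strongly_connected_out_closed finite_Diff)
  then obtain u where "u \<in> T" by blast
  have "v \<notin> T" "T \<subseteq> S" using T(2) unfolding out_closed_def by blast+
  with \<open>u \<in> T\<close> assms(2,3) have "(u, v) \<in> (Restr E S)\<^sup>*"
    unfolding strongly_connected_on_def by blast
  then obtain a b where ab: "(a, b) \<in> Restr E S" "a \<in> T" "b \<notin> T"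
    using rtrancl_exit_arc[OF _ \<open>u \<in> T\<close> \<open>v \<notin> T\<close>] by blast
  with T(2) have "b = v" unfolding out_closed_def by blast
  with T ab show thesis using that by blast
qed

lemma ex_strongly_connected_out_closed_path_from:
  assumes "finite U" "y \<in> U"
  obtains T ps where "T \<noteq> {}" "out_closed E U T" "strongly_connected_on E T"
    "ps \<noteq> []" "hd ps = y" "last ps \<in> T" "distinct ps" "set (butlast ps) \<inter> T = {}"
    "successively (\<lambda>x y. (x, y) \<in> E) ps" "set ps \<subseteq> U"
proof -
  define X where "X = {b \<in> U. (y, b) \<in> (Restr E U)\<^sup>*}"
  have "X \<noteq> {}" unfolding X_def using assms(2) by blast
  obtain T where T: "T \<subseteq> X" "T \<noteq> {}" "out_closed E U T" "strongly_connected_on E T"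
    using \<open>X \<noteq> {}\<close> unfolding X_def
    by (rule ex_strongly_connected_out_closed[OF assms(1) out_closed_reachable_set])
  then obtain t where "(y, t) \<in> (Restr E U)\<^sup>*" "t \<in> T" unfolding X_def by blast
  then obtain ps where ps: "ps \<noteq> []" "hd ps = y" "last ps \<in> T" "distinct ps"
    "set (butlast ps) \<inter> T = {}" "successively (\<lambda>x y. (x, y) \<in> Restr E U) ps"
    "set ps \<subseteq> (Restr E U)\<^sup>* `` {y}"
    by (rule rtrancl_shortest_path_into)
  have "successively (\<lambda>x y. (x, y) \<in> E) ps"
    using ps(6) by (rule successively_mono) blast
  moreover have "set ps \<subseteq> U"
  proof
    fix x assume "x \<in> set ps"
    with ps(7) have "(y, x) \<in> (Restr E U)\<^sup>*" by blast
    then show "x \<in> U" using assms(2) by (rule rtrancl_restrict_mem)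
  qed
  ultimately show thesis by (rule that[OF T(2-4) ps(1-5)])
qed

definition oriented :: "bool \<Rightarrow> 'b \<Rightarrow> 'b \<Rightarrow> 'b \<times> 'b" where
  "oriented d a b = (if d then (a, b) else (b, a))"

text \<open>A subdivision, with branch vertices ws, of the oriented path whose i-th edge points forward
  (from the i-th to the (i+1)-st vertex) iff ds ! i; the directed path Qs ! i subdivides that edge.\<close>
definition path_subdivision :: "('b \<times> 'b) set \<Rightarrow> bool list \<Rightarrow> 'b list \<Rightarrow> 'b list list \<Rightarrow> bool" where
  "path_subdivision E ds ws Qs \<longleftrightarrow>
     length ws = Suc (length ds) \<and> length Qs = length ds \<and> distinct ws \<and>
     (\<forall>i < length ds. dipath E (Qs ! i) \<and>
        (hd (Qs ! i), last (Qs ! i)) = oriented (ds ! i) (ws ! i) (ws ! Suc i) \<and>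
        set (inner (Qs ! i)) \<inter> set ws = {}) \<and>
     (\<forall>i < length ds. \<forall>j < length ds. i \<noteq> j \<longrightarrow> set (inner (Qs ! i)) \<inter> set (inner (Qs ! j)) = {})"

lemma map_prod_oriented: "map_prod f f (oriented d a b) = oriented d (f a) (f b)"
  by (simp add: oriented_def)

lemma set_inner_subset: "set (inner xs) \<subseteq> set xs"
  unfolding inner_def by (cases xs) (auto dest: in_set_butlastD)

lemma path_subdivision_snoc:
  assumes sub: "path_subdivision E ds ws Qs" and "set ws \<subseteq> T" "\<forall>Q \<in> set Qs. set Q \<subseteq> T"
    and "v \<notin> T" "dipath E Q" "(hd Q, last Q) = oriented d (last ws) v"
    and "set (inner Q) \<inter> insert v T = {}"
  shows "path_subdivision E (ds @ [d]) (ws @ [v]) (Qs @ [Q])"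
proof -
  have lengths: "length ws = Suc (length ds)" "length Qs = length ds"
    using sub unfolding path_subdivision_def by auto
  then have "last ws = ws ! length ds" by (metis diff_Suc_1 last_conv_nth list.size(3) nat.distinct(1))
  moreover have "set (inner (Qs ! i)) \<inter> insert v (set (inner Q)) = {}" if "i < length ds" for i
  proof -
    have "set (inner (Qs ! i)) \<subseteq> T"
      using assms(3) set_inner_subset lengths(2) that by (metis nth_mem subset_trans)
    then show ?thesis using assms(4,7) by blast
  qed
  ultimately show ?thesis
    using assms lengths unfolding path_subdivision_def
    by (auto simp: nth_append less_Suc_eq)
qed

lemma path_subdivision_in_strongly_connected:
  assumes "finite S" "strongly_connected_on E S" "\<forall>x. (x, x) \<notin> E"
    and "\<forall>u \<in> S. length ds \<le> card {w \<in> S. (u, w) \<in> E}" "v \<in> S"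
  shows "\<exists>ws Qs. path_subdivision E ds ws Qs \<and> last ws = v \<and> set ws \<subseteq> S \<and> (\<forall>Q \<in> set Qs. set Q \<subseteq> S)"
  using assms(1,2,4,5)
proof (induction ds arbitrary: S v rule: rev_induct)
  case Nil
  then show ?case by (intro exI[of _ "[v]"] exI[of _ "[]"]) (simp add: path_subdivision_def)
next
  case (snoc d ds)
  define U where "U = S - {v}"
  have IH: "\<exists>ws Qs. path_subdivision E ds ws Qs \<and> last ws = a \<and> set ws \<subseteq> T \<and> (\<forall>Q \<in> set Qs. set Q \<subseteq> T)"
    if "out_closed E U T" "strongly_connected_on E T" "a \<in> T" for T a
  proof (rule snoc.IH)
    show "finite T" using that(1) snoc.prems(1) unfolding U_def out_closed_def by (blast intro: finite_subset)
    show "\<forall>u \<in> T. length ds \<le> card {w \<in> T. (u, w) \<in> E}"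
      using card_out_neighbours_le_Suc[OF snoc.prems(1) that(1)[unfolded U_def]] snoc.prems(3)
        that(1) unfolding U_def out_closed_def by fastforce
  qed (use that in auto)
  have "0 < card {w \<in> S. (v, w) \<in> E}" using snoc.prems(3,4) by fastforce
  then obtain y where "y \<in> S" "(v, y) \<in> E" unfolding card_gt_0_iff by blast
  with assms(3) have "y \<in> U" unfolding U_def by blast
  show ?case
  proof (cases d)
    case True
    obtain T a where T: "T \<noteq> {}" "out_closed E U T" "strongly_connected_on E T" "a \<in> T" "(a, v) \<in> E"
      using ex_strongly_connected_out_closed_arc_to[OF snoc.prems(1,2,4)] \<open>y \<in> U\<close> unfolding U_def by blast
    then obtain ws Qs where ws: "path_subdivision E ds ws Qs" "last ws = a" "set ws \<subseteq> T"
      "\<forall>Q \<in> set Qs. set Q \<subseteq> T" using IH by blast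
    have "T \<subseteq> U" "v \<notin> T" using T(2) unfolding out_closed_def U_def by auto
    have "dipath E [a, v]" using T(4,5) assms(3) by (auto simp: dipath_iff_successively)
    then have "path_subdivision E (ds @ [d]) (ws @ [v]) (Qs @ [[a, v]])"
      by (rule path_subdivision_snoc[OF ws(1,3,4) \<open>v \<notin> T\<close>])
        (simp_all add: ws(2) True oriented_def inner_def)
    then show ?thesis using ws \<open>T \<subseteq> U\<close> T(4) snoc.prems(4) unfolding U_def
      by (intro exI[of _ "ws @ [v]"] exI[of _ "Qs @ [[a, v]]"]) auto
  next
    case False
    obtain T ps where T: "T \<noteq> {}" "out_closed E U T" "strongly_connected_on E T"
      and ps: "ps \<noteq> []" "hd ps = y" "last ps \<in> T" "distinct ps" "set (butlast ps) \<inter> T = {}"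
        "successively (\<lambda>x y. (x, y) \<in> E) ps" "set ps \<subseteq> U"
      using ex_strongly_connected_out_closed_path_from[OF _ \<open>y \<in> U\<close>] snoc.prems(1) unfolding U_def by blast
    then obtain ws Qs where ws: "path_subdivision E ds ws Qs" "last ws = last ps" "set ws \<subseteq> T"
      "\<forall>Q \<in> set Qs. set Q \<subseteq> T" using IH by blast
    have "T \<subseteq> U" "v \<notin> U" "v \<notin> T" using T(2) unfolding out_closed_def U_def by auto
    have "dipath E (v # ps)"
      using ps \<open>(v, y) \<in> E\<close> \<open>v \<notin> U\<close> by (cases ps) (auto simp: dipath_iff_successively successively_Cons)
    moreover have "set (inner (v # ps)) \<inter> insert v T = {}"
      using ps(5,7) \<open>v \<notin> U\<close> by (auto simp: inner_def dest: in_set_butlastD)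
    ultimately have "path_subdivision E (ds @ [d]) (ws @ [v]) (Qs @ [v # ps])"
      using ws(2) ps(1) False
      by (intro path_subdivision_snoc[OF ws(1,3,4) \<open>v \<notin> T\<close>]) (simp_all add: oriented_def)
    then show ?thesis using ws \<open>T \<subseteq> U\<close> ps(7) snoc.prems(4) unfolding U_def
      by (intro exI[of _ "ws @ [v]"] exI[of _ "Qs @ [v # ps]"]) auto
  qed
qed

definition oriented_path_along :: "'a list \<Rightarrow> 'a set \<Rightarrow> ('a \<times> 'a) set \<Rightarrow> bool" where
  "oriented_path_along vs V A \<longleftrightarrow> vs \<noteq> [] \<and> distinct vs \<and> set vs = V \<and>
     A \<subseteq> {(vs ! i, vs ! Suc i) | i. Suc i < length vs} \<union> {(vs ! Suc i, vs ! i) | i. Suc i < length vs} \<and>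
     (\<forall>i. Suc i < length vs \<longrightarrow> ((vs ! i, vs ! Suc i) \<in> A \<longleftrightarrow> (vs ! Suc i, vs ! i) \<notin> A))"

lemma oriented_path_iff: "oriented_path V A \<longleftrightarrow> digraph V A \<and> (\<exists>vs. oriented_path_along vs V A)"
  unfolding oriented_path_def oriented_path_along_def ..

definition path_directions :: "'a list \<Rightarrow> ('a \<times> 'a) set \<Rightarrow> bool list" where
  "path_directions vs A = map (\<lambda>i. (vs ! i, vs ! Suc i) \<in> A) [0..<length vs - 1]"

lemma length_path_directions: "length (path_directions vs A) = length vs - 1"
  by (simp add: path_directions_def)

lemma oriented_path_along_arc:
  assumes "oriented_path_along vs V A" "e \<in> A"
  shows "\<exists>i. Suc i < length vs \<and> e = oriented (path_directions vs A ! i) (vs ! i) (vs ! Suc i)"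
proof -
  from assms obtain i where i: "Suc i < length vs" "e = (vs ! i, vs ! Suc i) \<or> e = (vs ! Suc i, vs ! i)"
    unfolding oriented_path_along_def by blast
  moreover have "path_directions vs A ! i = ((vs ! i, vs ! Suc i) \<in> A)"
    using i(1) unfolding path_directions_def by (subst nth_map) auto
  ultimately show ?thesis
    using assms unfolding oriented_path_along_def oriented_def by (intro exI[of _ i]) auto
qed

lemma contains_subdivision_if_path_subdivision:
  assumes path: "oriented_path_along vs V A"
    and sub: "path_subdivision E (path_directions vs A) ws Qs" and "set ws \<subseteq> VD"
  shows "contains_subdivision V A VD E"
proof -
  let ?ds = "path_directions vs A"
  define f where "f = nth ws \<circ> inv_into {..<length vs} (nth vs)"
  have "length ws = length vs"
    using sub path unfolding path_subdivision_def oriented_path_along_def length_path_directions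
    by (cases vs) auto
  have "bij_betw (nth vs) {..<length vs} V"
    using path unfolding oriented_path_along_def by (auto intro: bij_betw_nth)
  then have "bij_betw f V (set ws)"
    unfolding f_def using \<open>length ws = length vs\<close> sub unfolding path_subdivision_def
    by (metis bij_betw_inv_into bij_betw_nth bij_betw_trans)
  have f_nth: "f (vs ! i) = ws ! i" if "i < length vs" for i
    using path that unfolding f_def oriented_path_along_def by (simp add: inj_on_nth)
  obtain idx where idx: "\<And>e. e \<in> A \<Longrightarrow> Suc (idx e) < length vs \<and>
      e = oriented (?ds ! idx e) (vs ! idx e) (vs ! Suc (idx e))"
    using oriented_path_along_arc[OF path] by metis
  have ends: "(f x, f y) = oriented (?ds ! idx (x, y)) (ws ! idx (x, y)) (ws ! Suc (idx (x, y)))"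
    if "(x, y) \<in> A" for x y
  proof -
    let ?i = "idx (x, y)"
    have "(f x, f y) = map_prod f f (x, y)" by simp
    also have "\<dots> = map_prod f f (oriented (?ds ! ?i) (vs ! ?i) (vs ! Suc ?i))"
      using idx[OF that] by (simp only:)
    also have "\<dots> = oriented (?ds ! ?i) (ws ! ?i) (ws ! Suc ?i)"
      using idx[OF that, THEN conjunct1] f_nth by (simp add: map_prod_oriented)
    finally show ?thesis .
  qed
  have Qs: "dipath E (Qs ! i) \<and> (hd (Qs ! i), last (Qs ! i)) = oriented (?ds ! i) (ws ! i) (ws ! Suc i)
      \<and> set (inner (Qs ! i)) \<inter> set ws = {}" "\<And>j. Suc j < length vs \<Longrightarrow> i \<noteq> j \<Longrightarrow>
      set (inner (Qs ! i)) \<inter> set (inner (Qs ! j)) = {}" if "Suc i < length vs" for i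
    using sub that unfolding path_subdivision_def length_path_directions by auto
  show ?thesis unfolding contains_subdivision_def
  proof (intro exI[of _ f] exI[of _ "\<lambda>e. Qs ! idx e"] conjI ballI impI)
    show "inj_on f V" "f ` V \<subseteq> VD"
      using \<open>bij_betw f V (set ws)\<close> \<open>set ws \<subseteq> VD\<close> by (auto simp: bij_betw_def)
    show "case e of (x, y) \<Rightarrow> dipath E (Qs ! idx (x, y)) \<and> hd (Qs ! idx (x, y)) = f x
        \<and> last (Qs ! idx (x, y)) = f y" if "e \<in> A" for e
    proof (cases e)
      case (Pair x y)
      with Qs(1)[OF idx[OF that, THEN conjunct1]] ends[of x y] that show ?thesis
        by (simp add: oriented_def split: if_splits)
    qed
    show "set (inner (Qs ! idx e)) \<inter> f ` V = {}" if "e \<in> A" for e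
      using that Qs(1)[OF idx[THEN conjunct1]] \<open>bij_betw f V (set ws)\<close> by (auto simp: bij_betw_def)
    show "set (inner (Qs ! idx e)) \<inter> set (inner (Qs ! idx e')) = {}"
      if "e \<in> A" "e' \<in> A" "e \<noteq> e'" for e e'
      using Qs(2)[OF idx[THEN conjunct1] idx[THEN conjunct1]] idx that by metis
  qed
qed

theorem contains_subdivision_oriented_path_if_min_outdeg:
  assumes "oriented_path V A" "digraph VD AD" "VD \<noteq> {}" "\<forall>v \<in> VD. card V - 1 \<le> outdeg AD v"
  shows "contains_subdivision V A VD AD"
proof -
  obtain vs where path: "oriented_path_along vs V A" using assms(1) oriented_path_iff by blast
  have "card V = length vs" using path distinct_card unfolding oriented_path_along_def by blast
  have "finite VD" "AD \<subseteq> VD \<times> VD" "\<forall>x. (x, x) \<notin> AD" using assms(2) unfolding digraph_def by auto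
  have "out_closed AD VD VD" unfolding out_closed_def by blast
  then obtain S where S: "S \<subseteq> VD" "S \<noteq> {}" "out_closed AD VD S" "strongly_connected_on AD S"
    by (rule ex_strongly_connected_out_closed[OF \<open>finite VD\<close> _ assms(3)])
  then obtain v where "v \<in> S" by blast
  have "{w \<in> S. (u, w) \<in> AD} = {w. (u, w) \<in> AD}" if "u \<in> S" for u
    using S(3) \<open>AD \<subseteq> VD \<times> VD\<close> that unfolding out_closed_def by blast
  with assms(4) S(1) \<open>card V = length vs\<close>
  have "\<forall>u \<in> S. length (path_directions vs A) \<le> card {w \<in> S. (u, w) \<in> AD}"
    by (auto simp: length_path_directions outdeg_def)
  moreover have "finite S" using \<open>finite VD\<close> S(1) by (rule finite_subset[rotated])
  ultimately obtain ws Qs where "path_subdivision AD (path_directions vs A) ws Qs" "set ws \<subseteq> S"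
    using path_subdivision_in_strongly_connected[OF _ S(4) \<open>\<forall>x. (x, x) \<notin> AD\<close> _ \<open>v \<in> S\<close>]
    by blast
  then show ?thesis using contains_subdivision_if_path_subdivision[OF path] S(1) by blast
qed

lemma card_le_if_contains_subdivision:
  assumes "contains_subdivision VF AF VD AD" "finite VD"
  shows "card VF \<le> card VD"
proof -
  from assms(1) have "\<exists>f :: 'a \<Rightarrow> 'b. inj_on f VF \<and> f ` VF \<subseteq> VD"
    unfolding contains_subdivision_def by (elim exE conjE) (intro exI conjI)
  then show ?thesis using card_inj_on_le assms(2) by blast
qed

lemma digraph_complete: "finite V \<Longrightarrow> digraph V (V \<times> V - Id)"
  by (auto simp: digraph_def)

lemma outdeg_complete:
  assumes "finite V" "v \<in> V"
  shows "outdeg (V \<times> V - Id) v = card V - 1"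
proof -
  have "{w. (v, w) \<in> V \<times> V - Id} = V - {v}" using assms(2) by auto
  then show ?thesis using assms by (simp add: outdeg_def)
qed

theorem corollary20:
  fixes V :: "'a set" and A :: "('a \<times> 'a) set"
  assumes "oriented_path V A"
  shows "mad_outdeg V A = card V - 1"
proof -
  let ?forces = "\<lambda>c. \<forall>(VD :: nat set) AD.
    digraph VD AD \<and> VD \<noteq> {} \<and> (\<forall>v \<in> VD. c \<le> outdeg AD v) \<longrightarrow> contains_subdivision V A VD AD"
  have "?forces (card V - 1)"
    using contains_subdivision_oriented_path_if_min_outdeg[OF assms] by blast
  moreover have "card V - 1 \<le> c" if "?forces c" for c
  proof (rule ccontr)
    assume "\<not> card V - 1 \<le> c"
    define K :: "nat set" where "K = {..<card V - 1}"
    have K: "finite K" "K \<noteq> {}" "card K = card V - 1"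
      using \<open>\<not> card V - 1 \<le> c\<close> by (auto simp: K_def lessThan_empty_iff)
    have "\<forall>v \<in> K. c \<le> outdeg (K \<times> K - Id) v"
      using outdeg_complete[OF K(1)] K(3) \<open>\<not> card V - 1 \<le> c\<close> by auto
    then have "contains_subdivision V A K (K \<times> K - Id)"
      using that digraph_complete[OF K(1)] K(2) by blast
    then have "card V \<le> card K" using K(1) by (rule card_le_if_contains_subdivision)
    with K(3) \<open>\<not> card V - 1 \<le> c\<close> show False by linarith
  qed
  ultimately show ?thesis unfolding mad_outdeg_def by (rule Least_equality)
qed

end
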